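(* Let $P$ denote the Petersen graph. For $i=0,\ldots,8$, let $P_i$ be a copy of the graph obtained from $P$ by deleting one edge $[u_i,v_i]$ (so $u_i,v_i$ are the two vertices of degree $2$ in $P_i$), the copies being pairwise vertex-disjoint. Let $G$ be the graph obtained from $P_0\cup\cdots\cup P_8$ by adding the edges $[v_i,u_{i+1}]$ for $i=0,\ldots,8$ (indices modulo $9$). Then $G$ is a bridgeless cubic graph of order $2n=90$ and $\chi'_{[44]}(G)\geq 5$, i.e. the edge set of $G$ cannot be covered by four matchings of size $n-1=44$.
   Context: All graphs are finite and simple. For a positive integer $k$, a $[k]$-matching of $G$ is a matching of $G$ with exactly $k$ edges. The excessive $[k]$-index $\chi'_{[k]}(G)$ is the minimum number of $[k]$-matchings of $G$ whose union is $E(G)$; if some edge of $G$ lies in no $[k]$-matching, one sets $\chi'_{[k]}(G)=\infty$. *)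

theory Defs
  imports Main "HOL-Library.Extended_Nat"
begin

definition simple_graph :: "'a set \<Rightarrow> 'a set set \<Rightarrow> bool" where
  "simple_graph V E \<longleftrightarrow> finite V \<and>
     (\<forall>e\<in>E. \<exists>u v. e = {u, v} \<and> u \<noteq> v \<and> u \<in> V \<and> v \<in> V)"

definition degree :: "'a set set \<Rightarrow> 'a \<Rightarrow> nat" where
  "degree E v = card {e\<in>E. v \<in> e}"

definition cubic :: "'a set \<Rightarrow> 'a set set \<Rightarrow> bool" where
  "cubic V E \<longleftrightarrow> (\<forall>v\<in>V. degree E v = 3)"

definition adj_rel :: "'a set set \<Rightarrow> ('a \<times> 'a) set" where
  "adj_rel E = {(u, v). {u, v} \<in> E}"

definition bridgeless :: "'a set \<Rightarrow> 'a set set \<Rightarrow> bool" where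
  "bridgeless V E \<longleftrightarrow> (\<forall>u v. {u, v} \<in> E \<longrightarrow> (u, v) \<in> (adj_rel (E - {{u, v}}))\<^sup>*)"

definition matching :: "'a set set \<Rightarrow> 'a set set \<Rightarrow> bool" where
  "matching E M \<longleftrightarrow> M \<subseteq> E \<and> (\<forall>e\<in>M. \<forall>f\<in>M. e \<noteq> f \<longrightarrow> e \<inter> f = {})"

definition k_matching :: "nat \<Rightarrow> 'a set set \<Rightarrow> 'a set set \<Rightarrow> bool" where
  "k_matching k E M \<longleftrightarrow> matching E M \<and> card M = k"

text \<open>Excessive [k]-index: minimum number of [k]-matchings whose union is E;
  infinity if no such finite family exists (Inf of the empty set of enat is infinity).\<close>
definition excessive_index :: "nat \<Rightarrow> 'a set set \<Rightarrow> enat" where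
  "excessive_index k E = Inf {enat t | t. \<exists>Ms :: 'a set set list.
      length Ms = t \<and> (\<forall>M\<in>set Ms. k_matching k E M) \<and> \<Union>(set Ms) = E}"

text \<open>Petersen graph on {0..9}: outer 5-cycle, spokes, inner pentagram.\<close>
definition petersen_edges :: "nat set set" where
  "petersen_edges =
     {{i, (i + 1) mod 5} | i. i < 5} \<union>
     {{i, i + 5} | i. i < 5} \<union>
     {{i + 5, (i + 2) mod 5 + 5} | i. i < 5}"

text \<open>Copy i of P minus the edge {0,1} (u_i = (i,0), v_i = (i,1)), i < 9,
  joined by the edges [v_i, u_{i+1 mod 9}].\<close>
definition G_vertices :: "(nat \<times> nat) set" where
  "G_vertices = {0..<9} \<times> {0..<10}"

definition G_edges :: "(nat \<times> nat) set set" where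
  "G_edges =
     {(\<lambda>x. (i, x)) ` e | i e. i < 9 \<and> e \<in> petersen_edges - {{0, 1}}} \<union>
     {{(i, 1), ((i + 1) mod 9, 0)} | i. i < 9}"

end

theory Submission
  imports Defs
begin

text \<open>
  A [44]-matching of the 90-vertex graph G misses exactly two vertices, so four of them miss at
  most eight vertices and some copy \<open>P\<^sub>i\<close> is covered completely by each of them. On
  \<open>P\<^sub>i - u\<^sub>i v\<^sub>i\<close> each matching then restricts to a matching covering all vertices but
  \<open>u\<^sub>i, v\<^sub>i\<close>, and these are exactly the traces of the six perfect matchings of the Petersen
  graph. Two distinct traces always share an edge contained in no other trace, unless both come
  from perfect matchings through \<open>u\<^sub>i v\<^sub>i\<close>; these two are the only traces missing \<open>u\<^sub>i\<close>,
  and one of them occurs, namely the trace of the matching containing the ring edge at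
  \<open>u\<^sub>i\<close>. Hence at least five traces, and so at least five matchings, are needed to cover
  the edges of \<open>P\<^sub>i - u\<^sub>i v\<^sub>i\<close>.
\<close>

lemma degree_eq_card_neighbours:
  assumes "\<forall>e\<in>E. \<exists>u w. e = {u, w}"
  shows "degree E v = card {w. {v, w} \<in> E}"
proof -
  have "{e\<in>E. v \<in> e} = (\<lambda>w. {v, w}) ` {w. {v, w} \<in> E}"
  proof (rule set_eqI, rule iffI)
    fix e assume "e \<in> {e\<in>E. v \<in> e}"
    moreover from this obtain u w where "e = {u, w}" using assms by blast
    ultimately show "e \<in> (\<lambda>w. {v, w}) ` {w. {v, w} \<in> E}"
      by (auto simp: insert_commute)
  qed auto
  moreover have "inj_on (\<lambda>w. {v, w}) {w. {v, w} \<in> E}"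
    by (rule inj_onI) (auto simp: doubleton_eq_iff)
  ultimately show ?thesis
    unfolding degree_def by (simp add: card_image)
qed

fun walk :: "'a set set \<Rightarrow> 'a list \<Rightarrow> bool" where
  "walk E (x # y # xs) \<longleftrightarrow> {x, y} \<in> E \<and> walk E (y # xs)"
| "walk E _ \<longleftrightarrow> True"

lemma walk_rtrancl: "walk E (x # xs) \<Longrightarrow> (x, last (x # xs)) \<in> (adj_rel E)\<^sup>*"
proof (induction xs arbitrary: x)
  case (Cons y ys)
  then have "(x, y) \<in> adj_rel E" and "(y, last (y # ys)) \<in> (adj_rel E)\<^sup>*"
    by (auto simp: adj_rel_def)
  then show ?case by (simp add: converse_rtrancl_into_rtrancl)
qed simp

lemma sym_adj_rel: "sym (adj_rel E)"
  by (auto intro: symI simp: adj_rel_def insert_commute)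

lemma adj_rel_rtrancl_sym: "(x, y) \<in> (adj_rel E)\<^sup>* \<Longrightarrow> (y, x) \<in> (adj_rel E)\<^sup>*"
  by (rule symD[OF sym_rtrancl[OF sym_adj_rel]])

lemma rtrancl_map:
  assumes "\<And>x y. (x, y) \<in> r \<Longrightarrow> (f x, f y) \<in> s" and "(x, y) \<in> r\<^sup>*"
  shows "(f x, f y) \<in> s\<^sup>*"
  using assms(2) by induction (auto intro: rtrancl_into_rtrancl assms(1))

lemma matching_edges_eq:
  "matching E M \<Longrightarrow> e \<in> M \<Longrightarrow> f \<in> M \<Longrightarrow> x \<in> e \<Longrightarrow> x \<in> f \<Longrightarrow> e = f"
  unfolding matching_def by blast

lemma matching_eq_if_saturating:
  assumes "matching E N" and "M \<subseteq> N" and "\<forall>e\<in>E. e \<inter> \<Union>M \<noteq> {}"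
  shows "N = M"
proof (rule ccontr)
  assume "N \<noteq> M"
  with assms(2) obtain e where e: "e \<in> N" "e \<notin> M" by blast
  then have "e \<in> E" using assms(1) by (auto simp: matching_def)
  with assms(3) obtain f x where f: "f \<in> M" "x \<in> e" "x \<in> f" by blast
  then have "e = f"
    using matching_edges_eq[OF assms(1) e(1)] assms(2) by blast
  with e f show False by blast
qed

lemma card_unmatched:
  assumes "simple_graph V E" and "k_matching k E M"
  shows "card (V - \<Union>M) = card V - 2 * k"
proof -
  have M: "M \<subseteq> E" "pairwise disjnt M" "card M = k"
    using assms(2) unfolding k_matching_def matching_def pairwise_def disjnt_def by auto
  have edge: "card e = 2 \<and> e \<subseteq> V" if "e \<in> M" for e
    using assms(1) M(1) that unfolding simple_graph_def by fastforce
  have "finite V" using assms(1) by (simp add: simple_graph_def)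
  then have "finite M"
    using edge by (meson Pow_iff finite_Pow_iff finite_subset subsetI)
  have "card (\<Union>M) = sum card M"
    using M(2) edge by (intro card_Union_disjoint) (auto intro: card_ge_0_finite)
  also have "\<dots> = 2 * k"
    using edge M(3) by simp
  finally have "card (\<Union>M) = 2 * k" .
  moreover have "\<Union>M \<subseteq> V" using edge by blast
  ultimately show ?thesis
    using card_Diff_subset[OF finite_subset] \<open>finite V\<close> by metis
qed

definition P_minus :: "nat set set" where
  "P_minus = petersen_edges - {{0, 1}}"

lemma P_minus_eq:
  "P_minus = {{1,2}, {2,3}, {3,4}, {0,4}, {0,5}, {1,6}, {2,7}, {3,8}, {4,9},
              {5,7}, {6,8}, {7,9}, {5,8}, {6,9}}"
proof -
  have five: "{f i |i. i < (5::nat)} = {f 0, f 1, f 2, f 3, f 4}" for f :: "nat \<Rightarrow> nat set"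
    by (auto simp: less_Suc_eq numeral_eq_Suc)
  show ?thesis
    unfolding P_minus_def petersen_edges_def five
    by (simp add: insert_commute)
       (simp add: numeral_2_eq_2 insert_Diff_if doubleton_eq_iff insert_commute)
qed

lemma P_minus_doubleton: "e \<in> P_minus \<Longrightarrow> \<exists>x y. e = {x, y}"
  unfolding P_minus_eq by blast

lemma P_minus_edge_vertices: "{x, y} \<in> P_minus \<Longrightarrow> x \<noteq> y \<and> x < 10 \<and> y < 10"
  unfolding P_minus_eq by (auto simp: doubleton_eq_iff)

lemma degree_P_minus:
  assumes "x < 10"
  shows "degree P_minus x = (if x \<le> 1 then 2 else 3)"
proof -
  have "\<forall>x<10. degree P_minus x = (if x \<le> 1 then 2 else 3)"
    unfolding degree_def P_minus_eq by code_simp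
  with assms show ?thesis by blast
qed

text \<open>The traces of the six perfect matchings of the Petersen graph; the last two come from
  the perfect matchings containing the deleted edge \<open>{0, 1}\<close>.\<close>

definition P_minus_near_perfect :: "nat set set set" where
  "P_minus_near_perfect =
    {{{1,2}, {3,4}, {0,5}, {6,8}, {7,9}}, {{1,2}, {0,4}, {3,8}, {5,7}, {6,9}},
     {{2,3}, {0,4}, {1,6}, {7,9}, {5,8}}, {{0,5}, {1,6}, {2,7}, {3,8}, {4,9}},
     {{2,3}, {4,9}, {5,7}, {6,8}}, {{3,4}, {2,7}, {5,8}, {6,9}}}"

lemma card_P_minus_near_perfect: "card P_minus_near_perfect = 6"
  unfolding P_minus_near_perfect_def by code_simp

lemma P_minus_near_perfect_saturating: "\<forall>M\<in>P_minus_near_perfect. {2..9} \<subseteq> \<Union>M"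
  unfolding P_minus_near_perfect_def by code_simp

lemma P_minus_edges_meet_2_9: "\<forall>e\<in>P_minus. e \<inter> {2..9} \<noteq> {}"
  unfolding P_minus_eq by code_simp

lemma P_minus_matching_contains_near_perfect:
  assumes "matching P_minus N" and "{2..9} \<subseteq> \<Union>N"
  shows "\<exists>M\<in>P_minus_near_perfect. M \<subseteq> N"
proof -
  have sub: "N \<subseteq> P_minus"
    using assms(1) unfolding matching_def by blast
  have "\<forall>x\<in>{2,3,4,5,6,7,8,9}. \<exists>e\<in>P_minus. e \<in> N \<and> x \<in> e"
  proof
    fix x :: nat assume "x \<in> {2,3,4,5,6,7,8,9}"
    then have "x \<in> {2..9}" by auto
    then show "\<exists>e\<in>P_minus. e \<in> N \<and> x \<in> e" using assms(2) sub by blast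
  qed
  note covered = this[unfolded P_minus_eq, simplified]
  \<comment> \<open>Facts and goal are now propositional in the fourteen atoms \<open>e \<in> N\<close>.\<close>
  have "\<forall>e\<in>P_minus. \<forall>f\<in>P_minus. e \<in> N \<and> f \<in> N \<longrightarrow> e = f \<or> e \<inter> f = {}"
    using assms(1) unfolding matching_def by blast
  note disjoint = this[unfolded P_minus_eq, simplified, simplified doubleton_eq_iff, simplified]
  show ?thesis
    using covered disjoint empty_subsetI[of N]
    unfolding P_minus_near_perfect_def bex_simps(5) bex_empty insert_subset One_nat_def
    by sat
qed

lemma P_minus_near_perfect_if_saturating:
  assumes "matching P_minus N" and "{2..9} \<subseteq> \<Union>N"
  shows "N \<in> P_minus_near_perfect"
proof -
  obtain M where M: "M \<in> P_minus_near_perfect" "M \<subseteq> N"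
    using P_minus_matching_contains_near_perfect[OF assms] by blast
  have "{2..9} \<subseteq> \<Union>M"
    using P_minus_near_perfect_saturating M(1) by blast
  then have "\<forall>e\<in>P_minus. e \<inter> \<Union>M \<noteq> {}"
    using P_minus_edges_meet_2_9 by (metis Int_mono order_refl subset_empty)
  with assms(1) M show ?thesis
    using matching_eq_if_saturating by metis
qed

text \<open>A third trace missing vertex 0 excludes the pair of traces of the perfect matchings
  through \<open>{0, 1}\<close>, whose common edges all lie outside \<open>P_minus\<close>.\<close>

lemma P_minus_private_edge:
  "\<forall>X\<in>P_minus_near_perfect. \<forall>Y\<in>P_minus_near_perfect. \<forall>N\<in>P_minus_near_perfect - {X, Y}.
     X \<noteq> Y \<and> 0 \<notin> \<Union>N \<longrightarrow>
     (\<exists>e\<in>P_minus. \<forall>Z\<in>P_minus_near_perfect. e \<in> Z \<longrightarrow> Z = X \<or> Z = Y)"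
  unfolding P_minus_near_perfect_def P_minus_eq by code_simp

lemma P_minus_cover_card:
  assumes "NN \<subseteq> P_minus_near_perfect" and "P_minus \<subseteq> \<Union>NN" and "\<exists>N\<in>NN. 0 \<notin> \<Union>N"
  shows "5 \<le> card NN"
proof -
  obtain N where N: "N \<in> NN" "0 \<notin> \<Union>N"
    using assms(3) by blast
  have fin: "finite P_minus_near_perfect"
    by (simp add: P_minus_near_perfect_def)
  have "card (P_minus_near_perfect - NN) \<le> Suc 0"
    unfolding card_le_Suc0_iff_eq[OF finite_Diff[OF fin]]
  proof (intro ballI)
    fix X Y assume X: "X \<in> P_minus_near_perfect - NN" and Y: "Y \<in> P_minus_near_perfect - NN"
    show "X = Y"
    proof (rule ccontr)
      assume "X \<noteq> Y"
      moreover have "N \<in> P_minus_near_perfect - {X, Y}"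
        using N(1) X Y assms(1) by blast
      ultimately obtain e where e: "e \<in> P_minus"
        and only_XY: "\<forall>Z\<in>P_minus_near_perfect. e \<in> Z \<longrightarrow> Z = X \<or> Z = Y"
        using P_minus_private_edge[rule_format, OF DiffD1[OF X] DiffD1[OF Y]] N(2) by blast
      then obtain Z where "Z \<in> NN" "e \<in> Z"
        using assms(2) by blast
      with only_XY assms(1) X Y show False by blast
    qed
  qed
  then show ?thesis
    using card_P_minus_near_perfect card_Diff_subset[OF finite_subset[OF assms(1) fin] assms(1)]
    by simp
qed

definition P_minus_detours :: "nat list list" where
  "P_minus_detours =
    [[1,6,8,3,2], [2,1,6,8,3], [3,2,7,9,4], [0,5,7,9,4], [0,4,3,8,5], [1,2,3,8,6], [2,1,6,9,7],
     [3,2,1,6,8], [4,3,2,7,9], [5,0,4,9,7], [6,1,2,3,8], [7,2,1,6,9], [5,0,4,3,8], [6,1,2,7,9]]"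

lemma P_minus_detours_avoid_their_edge:
  "\<forall>p\<in>set P_minus_detours. p \<noteq> [] \<and> walk (P_minus - {{hd p, last p}}) p"
  unfolding P_minus_detours_def P_minus_eq by code_simp

lemma P_minus_detours_cover: "\<forall>e\<in>P_minus. \<exists>p\<in>set P_minus_detours. e = {hd p, last p}"
  unfolding P_minus_detours_def P_minus_eq by code_simp

lemma P_minus_edge_not_bridge:
  assumes "{a, b} \<in> P_minus"
  shows "(a, b) \<in> (adj_rel (P_minus - {{a, b}}))\<^sup>*"
proof -
  obtain p where p: "p \<in> set P_minus_detours" and ab: "{a, b} = {hd p, last p}"
    using P_minus_detours_cover assms by blast
  with P_minus_detours_avoid_their_edge have "p = hd p # tl p"
    and "walk (P_minus - {{a, b}}) (hd p # tl p)"
    by auto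
  then have "(hd p, last p) \<in> (adj_rel (P_minus - {{a, b}}))\<^sup>*"
    using walk_rtrancl by metis
  with ab show ?thesis
    by (auto simp: doubleton_eq_iff dest: adj_rel_rtrancl_sym)
qed

lemma mod_9_succ: "j < 9 \<Longrightarrow> Suc j mod 9 = (if j = 8 then 0 else Suc j)"
  for j :: nat
  by (simp add: mod_Suc)

lemma mod_9_pred: "i < 9 \<Longrightarrow> (i + 8) mod 9 = (if i = 0 then 8 else i - 1)"
  for i :: nat
proof (cases i)
  case (Suc k)
  moreover assume "i < 9"
  ultimately show ?thesis by (simp add: mod_Suc)
qed simp

lemma G_edge_iff:
  "e \<in> G_edges \<longleftrightarrow>
     (\<exists>i x y. i < 9 \<and> {x, y} \<in> P_minus \<and> e = {(i, x), (i, y)}) \<or>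
     (\<exists>i<9. e = {(i, 1), ((i + 1) mod 9, 0)})"
  (is "_ \<longleftrightarrow> ?block \<or> ?ring")
proof
  assume "e \<in> G_edges"
  then consider (block) i e' where "i < 9" "e' \<in> P_minus" "e = Pair i ` e'"
    | (ring) "?ring"
    unfolding G_edges_def P_minus_def[symmetric] by blast
  then show "?block \<or> ?ring"
  proof cases
    case block
    then show ?thesis using P_minus_doubleton[OF block(2)] by auto
  qed simp
next
  assume "?block \<or> ?ring"
  then show "e \<in> G_edges"
  proof
    assume ?block
    then obtain i x y where "i < 9" "{x, y} \<in> P_minus" "e = Pair i ` {x, y}" by auto
    then show ?thesis unfolding G_edges_def P_minus_def[symmetric] by blast
  qed (auto simp: G_edges_def)
qed

lemma G_doubleton_iff:
  "{(i, x), (j, y)} \<in> G_edges \<longleftrightarrow>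
     (i = j \<and> i < 9 \<and> {x, y} \<in> P_minus) \<or>
     (i < 9 \<and> x = 1 \<and> y = 0 \<and> j = (i + 1) mod 9) \<or>
     (j < 9 \<and> y = 1 \<and> x = 0 \<and> i = (j + 1) mod 9)"
  unfolding G_edge_iff doubleton_eq_iff prod.inject
  by (auto simp: insert_commute)

lemma simple_graph_G: "simple_graph G_vertices G_edges"
  unfolding simple_graph_def
proof
  show "finite G_vertices" by (simp add: G_vertices_def)
  show "\<forall>e\<in>G_edges. \<exists>u v. e = {u, v} \<and> u \<noteq> v \<and> u \<in> G_vertices \<and> v \<in> G_vertices"
  proof
    fix e assume "e \<in> G_edges"
    then consider (block) i x y where "i < 9" "{x, y} \<in> P_minus" "e = {(i, x), (i, y)}"
      | (ring) i where "i < 9" "e = {(i, 1), ((i + 1) mod 9, 0)}"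
      unfolding G_edge_iff by blast
    then show "\<exists>u v. e = {u, v} \<and> u \<noteq> v \<and> u \<in> G_vertices \<and> v \<in> G_vertices"
    proof cases
      case block
      then show ?thesis using P_minus_edge_vertices[OF block(2)] by (auto simp: G_vertices_def)
    next
      case ring
      then show ?thesis
        by (intro exI[of _ "(i, 1)"] exI[of _ "((i + 1) mod 9, 0)"]) (auto simp: G_vertices_def)
    qed
  qed
qed

lemma card_G_vertices: "card G_vertices = 90"
  by (simp add: G_vertices_def)

lemma G_neighbours:
  assumes "i < 9"
  shows "{w. {(i, x), w} \<in> G_edges} =
    Pair i ` {y. {x, y} \<in> P_minus} \<union>
    (if x = 0 then {((i + 8) mod 9, 1)} else if x = 1 then {((i + 1) mod 9, 0)} else {})"
proof (rule set_eqI)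
  fix w :: "nat \<times> nat"
  obtain j y where w: "w = (j, y)" by force
  show "w \<in> {w. {(i, x), w} \<in> G_edges} \<longleftrightarrow> w \<in> Pair i ` {y. {x, y} \<in> P_minus} \<union>
    (if x = 0 then {((i + 8) mod 9, 1)} else if x = 1 then {((i + 1) mod 9, 0)} else {})"
  proof -
    have "i = (j + 1) mod 9 \<longleftrightarrow> j = (i + 8) mod 9" if "j < 9"
      using assms that by (auto simp: mod_9_succ mod_9_pred)
    then show ?thesis
      unfolding w mem_Collect_eq G_doubleton_iff using assms by auto
  qed
qed

lemma cubic_G: "cubic G_vertices G_edges"
  unfolding cubic_def
proof
  fix v assume "v \<in> G_vertices"
  then obtain i x where v: "v = (i, x)" and i: "i < 9" and x: "x < 10"
    by (auto simp: G_vertices_def)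
  define ring :: "(nat \<times> nat) set" where
    "ring = (if x = 0 then {((i + 8) mod 9, 1)} else if x = 1 then {((i + 1) mod 9, 0)} else {})"
  have "card {y. {x, y} \<in> P_minus} = degree P_minus x"
    using degree_eq_card_neighbours P_minus_doubleton by metis
  also have "\<dots> = (if x \<le> 1 then 2 else 3)"
    using degree_P_minus[OF x] .
  finally have card_block: "card {y. {x, y} \<in> P_minus} = (if x \<le> 1 then 2 else 3)" .
  then have "finite {y. {x, y} \<in> P_minus}"
    by (intro card_ge_0_finite) simp
  moreover have "Pair i ` {y. {x, y} \<in> P_minus} \<inter> ring = {}"
    using i unfolding ring_def by (auto simp: mod_9_succ mod_9_pred)
  moreover have "finite ring" and "card ring = (if x \<le> 1 then 1 else 0)"
    unfolding ring_def by simp_all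
  moreover have "degree G_edges v = card (Pair i ` {y. {x, y} \<in> P_minus} \<union> ring)"
    using degree_eq_card_neighbours[of G_edges] simple_graph_G G_neighbours[OF i]
    unfolding v ring_def simple_graph_def by metis
  ultimately show "degree G_edges v = 3"
    using card_block by (simp add: card_Un_disjoint card_image inj_on_def)
qed

lemma G_block_edge: "i < 9 \<Longrightarrow> {x, y} \<in> P_minus \<Longrightarrow> {(i, x), (i, y)} \<in> G_edges"
  by (simp add: G_doubleton_iff)

lemma G_block_edge_not_bridge:
  assumes "i < 9" and "{a, b} \<in> P_minus"
  shows "((i, a), (i, b)) \<in> (adj_rel (G_edges - {{(i, a), (i, b)}}))\<^sup>*"
  using P_minus_edge_not_bridge[OF assms(2)]
proof (rule rtrancl_map[where f = "Pair i", rotated])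
  fix x y assume "(x, y) \<in> adj_rel (P_minus - {{a, b}})"
  then have "{x, y} \<in> P_minus" and "{x, y} \<noteq> {a, b}"
    by (auto simp: adj_rel_def)
  then show "((i, x), (i, y)) \<in> adj_rel (G_edges - {{(i, a), (i, b)}})"
    using G_block_edge[OF assms(1)] by (auto simp: adj_rel_def doubleton_eq_iff)
qed

lemma G_ring_edge_not_bridge:
  assumes "k < 9"
  shows "((k, 1), ((k + 1) mod 9, 0)) \<in> (adj_rel (G_edges - {{(k, 1), ((k + 1) mod 9, 0)}}))\<^sup>*"
proof -
  define R where "R = adj_rel (G_edges - {{(k, 1), ((k + 1) mod 9, 0)}})"
  \<comment> \<open>The other eight ring edges and a \<open>u\<^sub>j\<close>-\<open>v\<^sub>j\<close> path in each copy lead from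
    \<open>u\<^sub>k\<^sub>+\<^sub>1\<close> once around the ring to \<open>v\<^sub>k\<close>.\<close>
  have "(k + 1) mod 9 \<noteq> k"
    using assms by (simp add: mod_9_succ)
  then have block: "((j, 0), (j, 1)) \<in> R\<^sup>*" if "j < 9" for j
    using walk_rtrancl[of P_minus 0 "[4, 3, 2, 1]"]
  proof (intro rtrancl_map[where f = "Pair j"])
    fix x y assume "(x, y) \<in> adj_rel P_minus"
    then show "((j, x), (j, y)) \<in> R"
      using G_block_edge[OF that] \<open>(k + 1) mod 9 \<noteq> k\<close>
      unfolding R_def adj_rel_def by (auto simp: doubleton_eq_iff)
  qed (simp add: P_minus_eq doubleton_eq_iff)
  have ring: "((j, 1), ((j + 1) mod 9, 0)) \<in> R" if "j < 9" and "j \<noteq> k" for j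
    using that unfolding R_def adj_rel_def by (auto simp: G_doubleton_iff doubleton_eq_iff)
  have "(((k + 1) mod 9, 0), ((k + 1 + n) mod 9, 0)) \<in> R\<^sup>*" if "n \<le> 8" for n
    using that
  proof (induction n)
    case (Suc n)
    define j where "j = (k + 1 + n) mod 9"
    have "j < 9" and "(j + 1) mod 9 = (k + 1 + Suc n) mod 9"
      unfolding j_def by (simp_all add: mod_Suc_eq)
    moreover have "j \<noteq> k"
      using Suc.prems assms mod_if[of "k + 1 + n" 9] unfolding j_def by (auto split: if_splits)
    ultimately have "((j, 0), ((k + 1 + Suc n) mod 9, 0)) \<in> R\<^sup>*"
      using block ring by (metis rtrancl_into_rtrancl)
    with Suc show ?case
      unfolding j_def by (meson Suc_leD rtrancl_trans)
  qed simp
  from this[of 8] have "(((k + 1) mod 9, 0), (k, 0)) \<in> R\<^sup>*"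
    using assms by simp
  then have "(((k + 1) mod 9, 0), (k, 1)) \<in> R\<^sup>*"
    using block[OF assms] by (rule rtrancl_trans)
  then show ?thesis
    unfolding R_def by (rule adj_rel_rtrancl_sym)
qed

lemma bridgeless_G: "bridgeless G_vertices G_edges"
  unfolding bridgeless_def
proof (intro allI impI)
  fix u v assume "{u, v} \<in> G_edges"
  then consider (block) i a b where "i < 9" "{a, b} \<in> P_minus" "{u, v} = {(i, a), (i, b)}"
    | (ring) i where "i < 9" "{u, v} = {(i, 1), ((i + 1) mod 9, 0)}"
    unfolding G_edge_iff by blast
  then show "(u, v) \<in> (adj_rel (G_edges - {{u, v}}))\<^sup>*"
  proof cases
    case block
    note path = G_block_edge_not_bridge[OF block(1,2)]
    show ?thesis
      unfolding block(3) using block(3) path adj_rel_rtrancl_sym[OF path]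
      by (auto simp: doubleton_eq_iff)
  next
    case ring
    note path = G_ring_edge_not_bridge[OF ring(1)]
    show ?thesis
      unfolding ring(2) using ring(2) path adj_rel_rtrancl_sym[OF path]
      by (auto simp: doubleton_eq_iff)
  qed
qed

definition block_part :: "nat \<Rightarrow> (nat \<times> nat) set set \<Rightarrow> nat set set" where
  "block_part i M = {e \<in> P_minus. Pair i ` e \<in> M}"

lemma matching_block_part:
  assumes "matching G_edges M"
  shows "matching P_minus (block_part i M)"
  unfolding matching_def
proof (intro conjI ballI impI)
  show "block_part i M \<subseteq> P_minus"
    by (auto simp: block_part_def)
  have inj: "inj (Pair i)"
    by (simp add: inj_on_def)
  fix e f assume "e \<in> block_part i M" "f \<in> block_part i M" "e \<noteq> f"
  then have "Pair i ` e \<in> M" "Pair i ` f \<in> M" "Pair i ` e \<noteq> Pair i ` f"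
    by (simp_all add: block_part_def inj_image_eq_iff[OF inj])
  then have "Pair i ` e \<inter> Pair i ` f = {}"
    using assms[unfolded matching_def, THEN conjunct2, rule_format] by simp
  then show "e \<inter> f = {}" by auto
qed

lemma G_edge_at_inner_vertex:
  assumes "g \<in> G_edges" and "(i, x) \<in> g" and "2 \<le> x"
  shows "\<exists>e\<in>P_minus. g = Pair i ` e \<and> x \<in> e"
proof -
  from assms(1) consider (block) j a b where "{a, b} \<in> P_minus" "g = {(j, a), (j, b)}"
    | (ring) j where "g = {(j, 1), ((j + 1) mod 9, 0)}"
    unfolding G_edge_iff by blast
  then show ?thesis
  proof cases
    case block
    then have "j = i" and "x \<in> {a, b}"
      using assms(2) by auto
    with block show ?thesis
      by (intro bexI[of _ "{a, b}"]) simp_all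
  next
    case ring
    then show ?thesis
      using assms(2,3) by auto
  qed
qed

lemma block_part_saturating:
  assumes "M \<subseteq> G_edges" and "\<forall>x<10. (i, x) \<in> \<Union>M"
  shows "{2..9} \<subseteq> \<Union>(block_part i M)"
proof
  fix x :: nat assume x: "x \<in> {2..9}"
  then have "(i, x) \<in> \<Union>M"
    using assms(2) by simp
  then obtain g where "g \<in> M" "(i, x) \<in> g" "2 \<le> x"
    using x by auto
  with assms(1) obtain e where "e \<in> P_minus" "g = Pair i ` e" "x \<in> e"
    using G_edge_at_inner_vertex by blast
  with \<open>g \<in> M\<close> show "x \<in> \<Union>(block_part i M)"
    by (auto simp: block_part_def)
qed

lemma block_part_misses_0:
  assumes "matching G_edges M" and "{((i + 8) mod 9, 1), (i, 0)} \<in> M"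
  shows "0 \<notin> \<Union>(block_part i M)"
proof
  assume "0 \<in> \<Union>(block_part i M)"
  then obtain e where "Pair i ` e \<in> M" "(i, 0) \<in> Pair i ` e"
    by (auto simp: block_part_def)
  with assms have "Pair i ` e = {((i + 8) mod 9, 1), (i, 0)}"
    using matching_edges_eq by (metis insertCI)
  moreover have "(i + 8) mod 9 \<noteq> i"
    using mod_9_pred[of i] by (cases "i < 9") auto
  ultimately show False
    by (metis fst_conv imageE insertI1)
qed

lemma saturated_block_exists:
  assumes "\<forall>M\<in>set Ms. k_matching 44 G_edges M" and "length Ms \<le> 4"
  shows "\<exists>i<9. \<forall>M\<in>set Ms. \<forall>x<10. (i, x) \<in> \<Union>M"
proof -
  define W where "W = (\<Union>M\<in>set Ms. G_vertices - \<Union>M)"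
  have "finite W"
    unfolding W_def G_vertices_def by simp
  have "card W \<le> (\<Sum>M\<in>set Ms. card (G_vertices - \<Union>M))"
    unfolding W_def by (rule card_UN_le) simp
  also have "\<dots> = (\<Sum>M\<in>set Ms. 2)"
    using assms(1) card_unmatched[OF simple_graph_G] card_G_vertices by (intro sum.cong) auto
  also have "\<dots> \<le> 8"
    using card_length[of Ms] assms(2) by simp
  finally have "card (fst ` W) < card {..<9::nat}"
    using card_image_le[OF \<open>finite W\<close>, of fst] by simp
  then have "\<not> {..<9} \<subseteq> fst ` W"
    using card_mono[OF finite_imageI[OF \<open>finite W\<close>]] by (meson not_le)
  then obtain i where i: "i < 9" "i \<notin> fst ` W"
    by auto
  have "(i, x) \<in> \<Union>M" if "M \<in> set Ms" and "x < 10" for M x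
  proof (rule ccontr)
    assume "(i, x) \<notin> \<Union>M"
    with that i(1) have "(i, x) \<in> W"
      unfolding W_def G_vertices_def by auto
    with i(2) show False
      by force
  qed
  with i(1) show ?thesis
    by blast
qed

lemma length_ge_5_if_G_cover:
  assumes "\<forall>M\<in>set Ms. k_matching 44 G_edges M" and "\<Union>(set Ms) = G_edges"
  shows "5 \<le> length Ms"
proof (rule ccontr)
  assume "\<not> 5 \<le> length Ms"
  then have "length Ms \<le> 4"
    by simp
  then obtain i where i: "i < 9" and saturated: "\<forall>M\<in>set Ms. \<forall>x<10. (i, x) \<in> \<Union>M"
    using saturated_block_exists assms(1) by blast
  have matching: "matching G_edges M" if "M \<in> set Ms" for M
    using assms(1) that by (simp add: k_matching_def)
  define NN where "NN = block_part i ` set Ms"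
  have "NN \<subseteq> P_minus_near_perfect"
  proof
    fix N assume "N \<in> NN"
    then obtain M where M: "M \<in> set Ms" "N = block_part i M"
      unfolding NN_def by blast
    have "M \<subseteq> G_edges"
      using matching[OF M(1)] by (simp add: matching_def)
    then have "{2..9} \<subseteq> \<Union>N"
      unfolding M(2) using saturated M(1) by (intro block_part_saturating) simp_all
    with M show "N \<in> P_minus_near_perfect"
      using P_minus_near_perfect_if_saturating matching_block_part matching by blast
  qed
  moreover have "P_minus \<subseteq> \<Union>NN"
  proof
    fix e assume e: "e \<in> P_minus"
    then obtain a b where ab: "e = {a, b}"
      using P_minus_doubleton by blast
    then have "{(i, a), (i, b)} \<in> \<Union>(set Ms)"
      using G_block_edge[OF i] e assms(2) by simp
    then obtain M where "M \<in> set Ms" "Pair i ` e \<in> M"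
      using ab by auto
    with e show "e \<in> \<Union>NN"
      by (auto simp: NN_def block_part_def)
  qed
  moreover have "\<exists>N\<in>NN. 0 \<notin> \<Union>N"
  proof -
    have "i = ((i + 8) mod 9 + 1) mod 9"
      using i by (auto simp: mod_9_pred mod_Suc)
    then have "{((i + 8) mod 9, 1), (i, 0)} \<in> \<Union>(set Ms)"
      unfolding assms(2) G_doubleton_iff by simp
    then obtain M where "M \<in> set Ms" "{((i + 8) mod 9, 1), (i, 0)} \<in> M"
      by blast
    then show ?thesis
      using block_part_misses_0[OF matching] unfolding NN_def by blast
  qed
  ultimately have "5 \<le> card NN"
    by (rule P_minus_cover_card)
  moreover have "card NN \<le> length Ms"
    unfolding NN_def using card_image_le[of "set Ms"] card_length[of Ms] by (meson List.finite_set le_trans)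
  ultimately show False
    using \<open>\<not> 5 \<le> length Ms\<close> by simp
qed

lemma excessive_index_G: "5 \<le> excessive_index 44 G_edges"
  unfolding excessive_index_def
proof (rule Inf_greatest)
  fix t assume "t \<in> {enat t |t. \<exists>Ms :: (nat \<times> nat) set set list. length Ms = t \<and>
      (\<forall>M\<in>set Ms. k_matching 44 G_edges M) \<and> \<Union>(set Ms) = G_edges}"
  then show "5 \<le> t"
    using length_ge_5_if_G_cover by auto
qed

theorem mainTheorem8:
  shows "simple_graph G_vertices G_edges \<and> cubic G_vertices G_edges \<and>
         bridgeless G_vertices G_edges \<and> card G_vertices = 90 \<and>
         excessive_index 44 G_edges \<ge> 5"
  using simple_graph_G cubic_G bridgeless_G card_G_vertices excessive_index_G by blast

end
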